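(* Let $\lambda_0,\omega\in\mathbb{C}$ with $\omega\neq0$, let $\lambda_j=\lambda_0+j\omega$ for $j=0,\dots,n$, and let $a\ne b$ be real with $e^{\omega(b-a)}\neq1$. For $k=0,\dots,n$ define $$p_{n,k}(x):=\frac{e^{\lambda_0(x-a)}}{k!\,\omega^k}\big(e^{\omega(x-a)}-1\big)^k\left(\frac{1-e^{\omega(x-b)}}{1-e^{\omega(a-b)}}\right)^{n-k}.$$ Then each $p_{n,k}$ belongs to $E_{(\lambda_0,\dots,\lambda_n)}$, has a zero of order exactly $k$ at $a$ and a zero of order exactly $n-k$ at $b$, and satisfies $k!\lim_{x\to a}p_{n,k}(x)/(x-a)^k=1$; i.e. $p_{n,k}$, $k=0,\dots,n$, is the Bernstein basis of $E_{(\lambda_0,\dots,\lambda_n)}$ with respect to $a,b$.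
   Context: $E_{(\lambda_0,\dots,\lambda_n)}$ denotes the space of all $f\in C^\infty(\mathbb{R},\mathbb{C})$ with $(\frac{d}{dx}-\lambda_0)\cdots(\frac{d}{dx}-\lambda_n)f=0$. A zero of order (exactly) $k$ at $a$ means $f(a)=\dots=f^{(k-1)}(a)=0$, $f^{(k)}(a)\neq0$. The Bernstein basis with respect to $a\ne b$ is the unique family $p_{n,k}\in E_{(\lambda_0,\dots,\lambda_n)}$, $k=0,\dots,n$, with a zero of order exactly $k$ at $a$, exactly $n-k$ at $b$, and $p_{n,k}^{(k)}(a)=1$. *)

theory Defs
  imports "HOL-Analysis.Analysis"
begin

fun higher_deriv :: "nat \<Rightarrow> (real \<Rightarrow> complex) \<Rightarrow> real \<Rightarrow> complex" where
  "higher_deriv 0 f = f"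
| "higher_deriv (Suc j) f = (\<lambda>x. vector_derivative (higher_deriv j f) (at x))"

definition smooth :: "(real \<Rightarrow> complex) \<Rightarrow> bool" where
  "smooth f \<longleftrightarrow> (\<forall>j x. higher_deriv j f differentiable (at x))"

definition diff_shift :: "complex \<Rightarrow> (real \<Rightarrow> complex) \<Rightarrow> real \<Rightarrow> complex" where
  "diff_shift \<mu> f = (\<lambda>x. vector_derivative f (at x) - \<mu> * f x)"

fun diff_op :: "(nat \<Rightarrow> complex) \<Rightarrow> nat \<Rightarrow> (real \<Rightarrow> complex) \<Rightarrow> real \<Rightarrow> complex" where
  "diff_op lam 0 f = diff_shift (lam 0) f"
| "diff_op lam (Suc n) f = diff_op lam n (diff_shift (lam (Suc n)) f)"

definition E_space :: "(nat \<Rightarrow> complex) \<Rightarrow> nat \<Rightarrow> (real \<Rightarrow> complex) set" where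
  "E_space lam n = {f. smooth f \<and> diff_op lam n f = (\<lambda>_. 0)}"

definition zero_of_order :: "(real \<Rightarrow> complex) \<Rightarrow> real \<Rightarrow> nat \<Rightarrow> bool" where
  "zero_of_order f a k \<longleftrightarrow> (\<forall>j<k. higher_deriv j f a = 0) \<and> higher_deriv k f a \<noteq> 0"

text \<open>p is a Bernstein basis of E_(lam 0..lam n) with respect to a, b (the defining
  properties; uniqueness of such a family is part of the paper's definition, not of the claim).\<close>
definition is_bernstein_basis ::
  "(nat \<Rightarrow> complex) \<Rightarrow> nat \<Rightarrow> real \<Rightarrow> real \<Rightarrow> (nat \<Rightarrow> real \<Rightarrow> complex) \<Rightarrow> bool" where
  "is_bernstein_basis lam n a b p \<longleftrightarrow>
     (\<forall>k\<le>n. p k \<in> E_space lam n \<and> zero_of_order (p k) a k \<and> zero_of_order (p k) b (n - k)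
            \<and> higher_deriv k (p k) a = 1)"

end

theory Submission
  imports Defs "HOL-Computational_Algebra.Polynomial"
begin

text \<open>
  Write \<open>U(x) = e^{\<omega>(x-a)} - 1\<close> and
  \<open>B(x) = (1 - e^{\<omega>(x-b)}) / (1 - e^{\<omega>(a-b)})\<close>, so that
  \<open>p\<^sub>n\<^sub>,\<^sub>k = e^{\<lambda>\<^sub>0(x-a)} U^k B^{n-k} / (k! \<omega>^k)\<close>.

  (1) All functions involved lie in the algebra \<open>exp_poly\<close> generated by the exponentials
      \<open>c e^{\<mu>x}\<close>; it is closed under differentiation, hence consists of smooth functions.
  (2) If \<open>u(a) = 0\<close> then \<open>g u^k\<close> has vanishing derivatives of order \<open>< k\<close> at \<open>a\<close> and
      \<open>k\<close>-th derivative \<open>k! g(a) u'(a)^k\<close>.  Applied with \<open>u = U\<close> at \<open>a\<close> and \<open>u = B\<close> at \<open>b\<close>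
      this gives the exact orders of the zeros and the normalisation.
  (3) \<open>(d/dx - \<lambda>\<^sub>0)\<cdots>(d/dx - \<lambda>\<^sub>n)\<close> annihilates every sum \<open>\<Sum>\<^sub>i c\<^sub>i e^{\<lambda>\<^sub>i x}\<close>, and since
      \<open>U\<close> and \<open>B\<close> are affine in \<open>z = e^{\<omega>(x-a)}\<close>, \<open>p\<^sub>n\<^sub>,\<^sub>k\<close> is \<open>e^{\<lambda>\<^sub>0(x-a)}\<close> times a polynomial
      of degree \<open>\<le> n\<close> in \<open>z\<close>, i.e. such a sum with \<open>\<lambda>\<^sub>i = \<lambda>\<^sub>0 + i\<omega>\<close>.
  (4) The limit follows from \<open>(e^{\<omega>(x-a)} - 1)/(x-a) \<rightarrow> \<omega>\<close>.
\<close>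

section \<open>Exponential polynomials\<close>

inductive_set exp_poly :: "(real \<Rightarrow> complex) set" where
  exp_poly_exp: "(\<lambda>x. c * exp (\<mu> * of_real x)) \<in> exp_poly"
| exp_poly_add: "f \<in> exp_poly \<Longrightarrow> g \<in> exp_poly \<Longrightarrow> (\<lambda>x. f x + g x) \<in> exp_poly"
| exp_poly_mult: "f \<in> exp_poly \<Longrightarrow> g \<in> exp_poly \<Longrightarrow> (\<lambda>x. f x * g x) \<in> exp_poly"

lemma has_vector_derivative_exp_shift:
  fixes \<mu> :: complex
  shows "((\<lambda>x. exp (\<mu> * of_real (x - a))) has_vector_derivative (\<mu> * exp (\<mu> * of_real (x - a)))) (at x)"
proof -
  have "((\<lambda>z. exp (\<mu> * (z - of_real a))) has_field_derivative (exp (\<mu> * (of_real x - of_real a)) * \<mu>))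
          (at (of_real x))"
    by (auto intro!: derivative_eq_intros)
  from has_vector_derivative_real_field[OF this] show ?thesis by (simp add: mult.commute)
qed

lemma has_vector_derivative_exp:
  fixes \<mu> :: complex
  shows "((\<lambda>x. exp (\<mu> * of_real x)) has_vector_derivative (\<mu> * exp (\<mu> * of_real x))) (at x)"
  using has_vector_derivative_exp_shift[of \<mu> 0 x] by simp

lemma exp_poly_has_derivative:
  "f \<in> exp_poly \<Longrightarrow> \<exists>g\<in>exp_poly. \<forall>x. (f has_vector_derivative g x) (at x)"
proof (induction rule: exp_poly.induct)
  case (exp_poly_exp c \<mu>)
  have "((\<lambda>x. c * exp (\<mu> * of_real x)) has_vector_derivative (c * \<mu>) * exp (\<mu> * of_real x)) (at x)" for x
    using has_vector_derivative_mult_right[OF has_vector_derivative_exp, of c \<mu>] by (simp add: mult.assoc)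
  then show ?case
    by (intro bexI[of _ "\<lambda>x. (c * \<mu>) * exp (\<mu> * of_real x)"] allI exp_poly.exp_poly_exp)
next
  case (exp_poly_add f g)
  then obtain f' g' where "f' \<in> exp_poly" "g' \<in> exp_poly" "\<And>x. (f has_vector_derivative f' x) (at x)"
    "\<And>x. (g has_vector_derivative g' x) (at x)" by blast
  then show ?case
    by (intro bexI[of _ "\<lambda>x. f' x + g' x"]) (auto intro: has_vector_derivative_add exp_poly.exp_poly_add)
next
  case (exp_poly_mult f g)
  then obtain f' g' where "f' \<in> exp_poly" "g' \<in> exp_poly" "\<And>x. (f has_vector_derivative f' x) (at x)"
    "\<And>x. (g has_vector_derivative g' x) (at x)" by blast
  then show ?case
    by (intro bexI[of _ "\<lambda>x. f x * g' x + f' x * g x"])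
       (use exp_poly_mult.hyps in \<open>auto intro!: has_vector_derivative_mult exp_poly.intros\<close>)
qed

lemma exp_poly_vector_derivative:
  assumes "f \<in> exp_poly"
  shows "(\<lambda>x. vector_derivative f (at x)) \<in> exp_poly"
    and "(f has_vector_derivative vector_derivative f (at x)) (at x)"
proof -
  obtain g where g: "g \<in> exp_poly" "\<And>x. (f has_vector_derivative g x) (at x)"
    using exp_poly_has_derivative[OF assms] by blast
  then have "(\<lambda>x. vector_derivative f (at x)) = g" using vector_derivative_at by blast
  with g show "(\<lambda>x. vector_derivative f (at x)) \<in> exp_poly"
    and "(f has_vector_derivative vector_derivative f (at x)) (at x)"
    by auto
qed

lemma higher_deriv_exp_poly: "f \<in> exp_poly \<Longrightarrow> higher_deriv j f \<in> exp_poly"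
  by (induction j) (auto intro: exp_poly_vector_derivative)

lemma smooth_exp_poly: "f \<in> exp_poly \<Longrightarrow> smooth f"
  unfolding smooth_def
  using higher_deriv_exp_poly exp_poly_vector_derivative(2) differentiableI_vector by blast

lemma exp_poly_const: "(\<lambda>x. c) \<in> exp_poly"
  using exp_poly_exp[of c 0] by simp

lemma exp_poly_exp_shift: "(\<lambda>x. exp (\<mu> * of_real (x - a))) \<in> exp_poly"
proof -
  have "(\<lambda>x. exp (\<mu> * of_real (x - a))) = (\<lambda>x. exp (- \<mu> * of_real a) * exp (\<mu> * of_real x))"
    by (rule ext) (simp add: exp_add[symmetric] algebra_simps)
  then show ?thesis using exp_poly_exp by metis
qed

lemma exp_poly_diff: "f \<in> exp_poly \<Longrightarrow> g \<in> exp_poly \<Longrightarrow> (\<lambda>x. f x - g x) \<in> exp_poly"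
  using exp_poly_add[of f "\<lambda>x. (-1) * g x"] exp_poly_mult[OF exp_poly_const, of g "-1"] by simp

lemma exp_poly_divide_const: "f \<in> exp_poly \<Longrightarrow> (\<lambda>x. f x / c) \<in> exp_poly"
  using exp_poly_mult[OF _ exp_poly_const, of f "inverse c"] by (simp add: divide_inverse)

lemma exp_poly_power: "f \<in> exp_poly \<Longrightarrow> (\<lambda>x. f x ^ k) \<in> exp_poly"
  by (induction k) (auto intro: exp_poly_const exp_poly_mult)

lemma exp_poly_sum: "(\<And>i. i \<in> A \<Longrightarrow> f i \<in> exp_poly) \<Longrightarrow> (\<lambda>x. \<Sum>i\<in>A. f i x) \<in> exp_poly"
  by (induction A rule: infinite_finite_induct) (auto intro: exp_poly_const exp_poly_add)

section \<open>Zeros of a product with a vanishing power\<close>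

lemma higher_deriv_Suc_inner:
  "higher_deriv (Suc j) f = higher_deriv j (\<lambda>x. vector_derivative f (at x))"
  by (induction j) auto

lemma has_vector_derivative_power:
  fixes u :: "real \<Rightarrow> complex"
  assumes "(u has_vector_derivative u') (at x)"
  shows "((\<lambda>x. u x ^ Suc k) has_vector_derivative (of_nat (Suc k) * u x ^ k * u')) (at x)"
proof (induction k)
  case 0 then show ?case using assms by simp
next
  case (Suc k)
  have "((\<lambda>x. u x * u x ^ Suc k) has_vector_derivative
          (u x * (of_nat (Suc k) * u x ^ k * u') + u' * u x ^ Suc k)) (at x)"
    by (rule has_vector_derivative_mult[OF assms Suc.IH])
  moreover have "(\<lambda>x. u x ^ Suc (Suc k)) = (\<lambda>x. u x * u x ^ Suc k)" by simp
  ultimately show ?case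
    by (simp only:) (erule has_vector_derivative_eq_rhs, simp add: algebra_simps)
qed

text \<open>The induction differentiates once:
  \<open>(g u^{k+1})' = (g' u + (k+1) g u') u^k\<close>.\<close>
lemma higher_deriv_times_power_at_zero:
  assumes "g \<in> exp_poly" "u \<in> exp_poly" "u a = 0"
  shows "(\<forall>j<k. higher_deriv j (\<lambda>x. g x * u x ^ k) a = 0) \<and>
         higher_deriv k (\<lambda>x. g x * u x ^ k) a = of_nat (fact k) * g a * vector_derivative u (at a) ^ k"
  using assms(1)
proof (induction k arbitrary: g)
  case 0 then show ?case by simp
next
  case (Suc k)
  define u' where "u' = (\<lambda>x. vector_derivative u (at x))"
  define g' where "g' = (\<lambda>x. vector_derivative g (at x))"
  define h where "h = (\<lambda>x. g' x * u x + of_nat (Suc k) * g x * u' x)"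
  have h: "h \<in> exp_poly" unfolding h_def g'_def u'_def
    using Suc.prems assms(2) by (intro exp_poly.intros exp_poly_const exp_poly_vector_derivative)
  have derivative: "(\<lambda>x. vector_derivative (\<lambda>x. g x * u x ^ Suc k) (at x)) = (\<lambda>x. h x * u x ^ k)"
  proof
    fix x
    have "((\<lambda>x. g x * u x ^ Suc k) has_vector_derivative
            (g x * (of_nat (Suc k) * u x ^ k * u' x) + g' x * u x ^ Suc k)) (at x)"
      unfolding u'_def g'_def
      by (intro has_vector_derivative_mult has_vector_derivative_power
          exp_poly_vector_derivative(2) Suc.prems assms(2))
    then show "vector_derivative (\<lambda>x. g x * u x ^ Suc k) (at x) = h x * u x ^ k"
      unfolding h_def by (simp add: vector_derivative_at algebra_simps)
  qed
  have shift: "higher_deriv (Suc i) (\<lambda>x. g x * u x ^ Suc k) = higher_deriv i (\<lambda>x. h x * u x ^ k)" for i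
    by (simp only: higher_deriv_Suc_inner derivative)
  note IH = Suc.IH[OF h]
  have "higher_deriv j (\<lambda>x. g x * u x ^ Suc k) a = 0" if "j < Suc k" for j
    using that IH shift assms(3) by (cases j) auto
  moreover have "higher_deriv (Suc k) (\<lambda>x. g x * u x ^ Suc k) a
                   = of_nat (fact (Suc k)) * g a * u' a ^ Suc k"
    using IH assms(3) by (simp only: shift) (simp add: h_def u'_def algebra_simps)
  ultimately show ?case unfolding u'_def by blast
qed

section \<open>Exponential sums lie in the kernel\<close>

lemma diff_shift_exp_sum:
  fixes \<mu> :: "nat \<Rightarrow> complex"
  shows "diff_shift \<nu> (\<lambda>x. \<Sum>j\<le>N. c j * exp (\<mu> j * of_real x))
         = (\<lambda>x. \<Sum>j\<le>N. (c j * (\<mu> j - \<nu>)) * exp (\<mu> j * of_real x))"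
proof
  fix x
  have "((\<lambda>x. \<Sum>j\<le>N. c j * exp (\<mu> j * of_real x)) has_vector_derivative
          (\<Sum>j\<le>N. c j * (\<mu> j * exp (\<mu> j * of_real x)))) (at x)"
    by (intro has_vector_derivative_sum has_vector_derivative_mult_right has_vector_derivative_exp)
  then show "diff_shift \<nu> (\<lambda>x. \<Sum>j\<le>N. c j * exp (\<mu> j * of_real x)) x
             = (\<Sum>j\<le>N. (c j * (\<mu> j - \<nu>)) * exp (\<mu> j * of_real x))"
    unfolding diff_shift_def
    by (simp add: vector_derivative_at sum_distrib_left sum_subtractf[symmetric] algebra_simps)
qed

lemma diff_op_exp_sum:
  fixes \<mu> :: "nat \<Rightarrow> complex"
  shows "diff_op lam m (\<lambda>x. \<Sum>j\<le>N. c j * exp (\<mu> j * of_real x))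
         = (\<lambda>x. \<Sum>j\<le>N. (c j * (\<Prod>i\<le>m. \<mu> j - lam i)) * exp (\<mu> j * of_real x))"
proof (induction m arbitrary: c)
  case 0 then show ?case by (simp add: diff_shift_exp_sum)
next
  case (Suc m)
  show ?case by (simp only: diff_op.simps diff_shift_exp_sum Suc.IH) (simp add: algebra_simps)
qed

text \<open>Hence every combination of \<open>e^{\<lambda>\<^sub>0 x}, \<dots>, e^{\<lambda>\<^sub>n x}\<close> lies in \<open>E_space lam n\<close>:
  each coefficient acquires the vanishing factor \<open>\<lambda>\<^sub>i - \<lambda>\<^sub>i\<close>.\<close>
lemma exp_sum_in_E_space:
  "(\<lambda>x. \<Sum>i\<le>n. c i * exp (lam i * of_real x)) \<in> E_space lam n"
proof -
  have "(\<Prod>j\<le>n. lam i - lam j) = 0" if "i \<le> n" for i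
    using that by (intro prod_zero) auto
  then have "diff_op lam n (\<lambda>x. \<Sum>i\<le>n. c i * exp (lam i * of_real x)) = (\<lambda>_. 0)"
    unfolding diff_op_exp_sum by (intro ext sum.neutral) auto
  moreover have "(\<lambda>x. \<Sum>i\<le>n. c i * exp (lam i * of_real x)) \<in> exp_poly"
    by (intro exp_poly_sum exp_poly_exp)
  ultimately show ?thesis unfolding E_space_def using smooth_exp_poly by blast
qed

lemma poly_as_sum:
  fixes q :: "'a::comm_semiring_1 poly"
  shows "degree q \<le> n \<Longrightarrow> poly q z = (\<Sum>i\<le>n. coeff q i * z ^ i)"
  unfolding poly_altdef by (rule sum.mono_neutral_left) (auto simp: coeff_eq_0)

lemma exp_times_poly_exp_in_E_space:
  fixes Q :: "complex poly"
  assumes "degree Q \<le> n" and lam: "\<And>j. j \<le> n \<Longrightarrow> lam j = l0 + of_nat j * w"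
  shows "(\<lambda>x. exp (l0 * of_real (x - a)) * poly Q (exp (w * of_real (x - a)))) \<in> E_space lam n"
proof -
  define c where "c = (\<lambda>i. coeff Q i * exp (- (lam i * of_real a)))"
  have "exp (l0 * of_real (x - a)) * poly Q (exp (w * of_real (x - a)))
          = (\<Sum>i\<le>n. c i * exp (lam i * of_real x))" for x
  proof -
    have monomial: "exp (l0 * of_real (x - a)) * exp (w * of_real (x - a)) ^ i
            = exp (- (lam i * of_real a)) * exp (lam i * of_real x)" if "i \<le> n" for i
    proof -
      have "exp (l0 * of_real (x - a)) * exp (w * of_real (x - a)) ^ i
              = exp (l0 * of_real (x - a) + of_nat i * (w * of_real (x - a)))"
        by (simp add: exp_add exp_of_nat_mult)
      also have "l0 * of_real (x - a) + of_nat i * (w * of_real (x - a))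
                   = - (lam i * of_real a) + lam i * of_real x"
        using lam[OF that] by (simp add: algebra_simps)
      finally show ?thesis by (simp only: exp_add)
    qed
    have "exp (l0 * of_real (x - a)) * poly Q (exp (w * of_real (x - a)))
            = (\<Sum>i\<le>n. coeff Q i * (exp (l0 * of_real (x - a)) * exp (w * of_real (x - a)) ^ i))"
      by (simp add: poly_as_sum[OF assms(1)] sum_distrib_left mult.left_commute)
    also have "\<dots> = (\<Sum>i\<le>n. c i * exp (lam i * of_real x))"
      by (intro sum.cong refl) (simp only: atMost_iff monomial c_def mult.assoc)
    finally show ?thesis .
  qed
  then show ?thesis using exp_sum_in_E_space[of c lam n] by simp
qed

lemma exp_difference_quotient_limit:
  fixes w :: complex
  shows "((\<lambda>x. (exp (w * of_real (x - a)) - 1) / of_real (x - a)) \<longlongrightarrow> w) (at a)"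
proof -
  have "((\<lambda>z. exp (w * z)) has_field_derivative w) (at 0)" by (auto intro!: derivative_eq_intros)
  then have L: "((\<lambda>z. (exp (w * z) - 1) / z) \<longlongrightarrow> w) (at 0)" using has_field_derivativeD by force
  have F: "filterlim (\<lambda>x. complex_of_real (x - a)) (at 0) (at a)"
    unfolding filterlim_at by (auto simp: eventually_at_filter intro!: tendsto_eq_intros)
  from filterlim_compose[OF L F] show ?thesis by (simp add: o_def)
qed

section \<open>The exponential Bernstein functions\<close>

definition bernstein_exp :: "complex \<Rightarrow> complex \<Rightarrow> real \<Rightarrow> real \<Rightarrow> nat \<Rightarrow> nat \<Rightarrow> real \<Rightarrow> complex" where
  "bernstein_exp l0 w a b n k x =
     exp (l0 * of_real (x - a)) / (of_nat (fact k) * w ^ k)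
     * (exp (w * of_real (x - a)) - 1) ^ k
     * ((1 - exp (w * of_real (x - b))) / (1 - exp (w * of_real (a - b)))) ^ (n - k)"

lemma has_vector_derivative_U:
  fixes w :: complex
  shows "((\<lambda>x. exp (w * of_real (x - a)) - 1) has_vector_derivative w * exp (w * of_real (x - a))) (at x)"
proof -
  have "((\<lambda>x. exp (w * of_real (x - a)) - 1) has_vector_derivative w * exp (w * of_real (x - a)) - 0) (at x)"
    by (intro has_vector_derivative_diff has_vector_derivative_exp_shift has_vector_derivative_const)
  then show ?thesis by simp
qed

lemma has_vector_derivative_B:
  fixes D :: complex
  shows "((\<lambda>x. (1 - exp (w * of_real (x - b))) / D) has_vector_derivative
           - w * exp (w * of_real (x - b)) / D) (at x)"
proof -
  have "((\<lambda>x. (1 - exp (w * of_real (x - b))) / D) has_vector_derivative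
           (0 - w * exp (w * of_real (x - b))) / D) (at x)"
    by (intro has_vector_derivative_divide has_vector_derivative_diff has_vector_derivative_exp_shift
        has_vector_derivative_const)
  then show ?thesis by simp
qed

text \<open>\<open>p\<^sub>n\<^sub>,\<^sub>k = e^{\<lambda>\<^sub>0(x-a)} Q(e^{\<omega>(x-a)})\<close> with \<open>Q = (z-1)^k ((1 - E z)/(1 - E))^{n-k} / (k! \<omega>^k)\<close>,
  \<open>E = e^{\<omega>(a-b)}\<close>, a polynomial of degree \<open>\<le> n\<close>.\<close>
lemma bernstein_exp_in_E_space:
  assumes "k \<le> n" and "\<And>j. j \<le> n \<Longrightarrow> lam j = l0 + of_nat j * w"
  shows "bernstein_exp l0 w a b n k \<in> E_space lam n"
proof -
  define E where "E = exp (w * of_real (a - b))"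
  define D where "D = 1 - E"
  define Q where "Q = smult (1 / (of_nat (fact k) * w ^ k)) ([:-1, 1:] ^ k * [:1 / D, - E / D:] ^ (n - k))"
  have "degree Q \<le> 1 * k + 1 * (n - k)"
    unfolding Q_def
    by (intro order.trans[OF degree_smult_le] order.trans[OF degree_mult_le] add_mono
        order.trans[OF degree_power_le] mult_right_mono) auto
  then have deg: "degree Q \<le> n" using assms(1) by simp
  have "bernstein_exp l0 w a b n k
          = (\<lambda>x. exp (l0 * of_real (x - a)) * poly Q (exp (w * of_real (x - a))))"
  proof
    fix x
    have "exp (w * of_real (x - b)) = E * exp (w * of_real (x - a))"
      unfolding E_def by (simp add: exp_add[symmetric] algebra_simps)
    then show "bernstein_exp l0 w a b n k x
                 = exp (l0 * of_real (x - a)) * poly Q (exp (w * of_real (x - a)))"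
      unfolding bernstein_exp_def Q_def D_def[symmetric] E_def[symmetric]
      by (simp add: poly_power diff_divide_distrib algebra_simps)
  qed
  then show ?thesis
    using exp_times_poly_exp_in_E_space[OF deg assms(2), of a] by simp
qed

lemma zero_of_order_times_power:
  assumes "g \<in> exp_poly" "u \<in> exp_poly" "u a = 0" "g a \<noteq> 0" "vector_derivative u (at a) \<noteq> 0"
  shows "zero_of_order (\<lambda>x. g x * u x ^ k) a k"
  using higher_deriv_times_power_at_zero[OF assms(1-3), of k] assms(4,5)
  unfolding zero_of_order_def by simp

lemma exp_ne_1_swap:
  fixes w :: complex
  assumes "exp (w * of_real (b - a)) \<noteq> 1"
  shows "exp (w * of_real (a - b)) \<noteq> 1"
proof
  assume "exp (w * of_real (a - b)) = 1"
  then have "exp (- (w * of_real (a - b))) = 1" by (simp add: exp_minus)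
  moreover have "- (w * of_real (a - b)) = w * of_real (b - a)" by (simp add: algebra_simps)
  ultimately show False using assms by simp
qed

text \<open>Near \<open>a\<close> the Bernstein function is \<open>g U^k\<close> with \<open>g(a) = 1/(k! \<omega>^k)\<close> and \<open>U'(a) = \<omega>\<close>.\<close>
lemma bernstein_exp_at_a:
  assumes "w \<noteq> 0" and "exp (w * of_real (a - b)) \<noteq> 1"
  shows "zero_of_order (bernstein_exp l0 w a b n k) a k"
    and "higher_deriv k (bernstein_exp l0 w a b n k) a = 1"
proof -
  define U where "U = (\<lambda>x. exp (w * of_real (x - a)) - 1)"
  define g where "g = (\<lambda>x. exp (l0 * of_real (x - a)) / (of_nat (fact k) * w ^ k)
                      * ((1 - exp (w * of_real (x - b))) / (1 - exp (w * of_real (a - b)))) ^ (n - k))"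
  have eq: "bernstein_exp l0 w a b n k = (\<lambda>x. g x * U x ^ k)"
    unfolding bernstein_exp_def g_def U_def by (rule ext) (simp add: ac_simps)
  have U: "U \<in> exp_poly" unfolding U_def
    by (intro exp_poly_divide_const exp_poly_diff exp_poly_const exp_poly_exp_shift)
  have g: "g \<in> exp_poly" unfolding g_def
    by (intro exp_poly_mult exp_poly_power exp_poly_divide_const exp_poly_diff exp_poly_const
        exp_poly_exp_shift)
  have Ua: "U a = 0" and ga: "g a = 1 / (of_nat (fact k) * w ^ k)"
    using assms(2) by (simp_all add: U_def g_def)
  have dU: "vector_derivative U (at a) = w"
    using has_vector_derivative_U[of w a a] unfolding U_def[symmetric] by (simp add: vector_derivative_at)
  show "zero_of_order (bernstein_exp l0 w a b n k) a k"
    unfolding eq using zero_of_order_times_power[OF g U Ua] ga dU assms(1) by simp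
  show "higher_deriv k (bernstein_exp l0 w a b n k) a = 1"
    unfolding eq using higher_deriv_times_power_at_zero[OF g U Ua, of k] ga dU assms(1) by simp
qed

text \<open>Near \<open>b\<close> it is \<open>h B^{n-k}\<close> with \<open>h(b) \<noteq> 0\<close> (because \<open>U(b) \<noteq> 0\<close>) and \<open>B'(b) = -\<omega>/D \<noteq> 0\<close>.\<close>
lemma bernstein_exp_at_b:
  assumes "w \<noteq> 0" and "exp (w * of_real (b - a)) \<noteq> 1"
  shows "zero_of_order (bernstein_exp l0 w a b n k) b (n - k)"
proof -
  define D where "D = 1 - exp (w * of_real (a - b))"
  have D: "D \<noteq> 0" using exp_ne_1_swap[OF assms(2)] by (simp add: D_def)
  define B where "B = (\<lambda>x. (1 - exp (w * of_real (x - b))) / D)"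
  define h where "h = (\<lambda>x. exp (l0 * of_real (x - a)) / (of_nat (fact k) * w ^ k)
                      * (exp (w * of_real (x - a)) - 1) ^ k)"
  have eq: "bernstein_exp l0 w a b n k = (\<lambda>x. h x * B x ^ (n - k))"
    unfolding bernstein_exp_def h_def B_def D_def by (rule ext) (simp add: ac_simps)
  have B: "B \<in> exp_poly" unfolding B_def
    by (intro exp_poly_divide_const exp_poly_diff exp_poly_const exp_poly_exp_shift)
  have h: "h \<in> exp_poly" unfolding h_def
    by (intro exp_poly_mult exp_poly_power exp_poly_divide_const exp_poly_diff exp_poly_const
        exp_poly_exp_shift)
  have Bb: "B b = 0" by (simp add: B_def)
  have hb: "h b \<noteq> 0" using assms by (simp add: h_def)
  have dB: "vector_derivative B (at b) = - w / D"
    using has_vector_derivative_B[of w b D b] unfolding B_def[symmetric]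
    by (simp add: vector_derivative_at)
  show ?thesis
    unfolding eq using zero_of_order_times_power[OF h B Bb hb] dB D assms(1) by simp
qed

text \<open>The normalisation \<open>k! p\<^sub>n\<^sub>,\<^sub>k(x)/(x-a)^k \<rightarrow> 1\<close>, from the difference quotient of \<open>U\<close>.\<close>
lemma bernstein_exp_limit:
  assumes "w \<noteq> 0" and "exp (w * of_real (a - b)) \<noteq> 1"
  shows "((\<lambda>x. of_nat (fact k) * (bernstein_exp l0 w a b n k x / of_real (x - a) ^ k)) \<longlongrightarrow> 1) (at a)"
proof -
  define B where "B = (\<lambda>x. (1 - exp (w * of_real (x - b))) / (1 - exp (w * of_real (a - b))))"
  define F where "F = (\<lambda>x. exp (l0 * of_real (x - a)) * B x ^ (n - k)
                         * ((exp (w * of_real (x - a)) - 1) / of_real (x - a)) ^ k / w ^ k)"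
  have "(F \<longlongrightarrow> exp (l0 * of_real (a - a)) * B a ^ (n - k) * w ^ k / w ^ k) (at a)"
    unfolding F_def B_def using assms
    by (intro tendsto_intros exp_difference_quotient_limit) auto
  then have "(F \<longlongrightarrow> 1) (at a)" using assms by (simp add: B_def)
  moreover have "\<forall>\<^sub>F x in at a. F x = of_nat (fact k) * (bernstein_exp l0 w a b n k x / of_real (x - a) ^ k)"
    unfolding eventually_at_filter
    by (rule always_eventually) (simp add: F_def B_def bernstein_exp_def assms(1) field_simps power_divide)
  ultimately show ?thesis by (rule tendsto_cong[THEN iffD1, rotated])
qed

theorem mainTheorem12:
  fixes l0 w :: complex and a b :: real and n :: nat
    and lam :: "nat \<Rightarrow> complex" and p :: "nat \<Rightarrow> real \<Rightarrow> complex"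
  assumes "w \<noteq> 0"
    and "\<And>j. j \<le> n \<Longrightarrow> lam j = l0 + of_nat j * w"
    and "a \<noteq> b"
    and "exp (w * of_real (b - a)) \<noteq> 1"
    and "\<And>k x. p k x =
          exp (l0 * of_real (x - a)) / (of_nat (fact k) * w ^ k)
          * (exp (w * of_real (x - a)) - 1) ^ k
          * ((1 - exp (w * of_real (x - b))) / (1 - exp (w * of_real (a - b)))) ^ (n - k)"
  shows "(\<forall>k\<le>n. p k \<in> E_space lam n
              \<and> zero_of_order (p k) a k
              \<and> zero_of_order (p k) b (n - k)
              \<and> ((\<lambda>x. of_nat (fact k) * (p k x / (of_real (x - a)) ^ k)) \<longlongrightarrow> 1) (at a))
         \<and> is_bernstein_basis lam n a b p"
proof -
  have p: "p = bernstein_exp l0 w a b n"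
    by (intro ext) (simp add: assms(5) bernstein_exp_def)
  have swap: "exp (w * of_real (a - b)) \<noteq> 1" using exp_ne_1_swap[OF assms(4)] .
  have "p k \<in> E_space lam n \<and> zero_of_order (p k) a k \<and> zero_of_order (p k) b (n - k)
        \<and> ((\<lambda>x. of_nat (fact k) * (p k x / (of_real (x - a)) ^ k)) \<longlongrightarrow> 1) (at a)
        \<and> higher_deriv k (p k) a = 1" if "k \<le> n" for k
    unfolding p
    using bernstein_exp_in_E_space[OF that assms(2)] bernstein_exp_at_a[OF assms(1) swap]
      bernstein_exp_at_b[OF assms(1,4)] bernstein_exp_limit[OF assms(1) swap]
    by simp
  then show ?thesis unfolding is_bernstein_basis_def by simp
qed

end
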